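(* Let $n\ge 2$, $0\le m\le n$ and $k$ generic. Among linear combinations of the currents $A_j$, $Q_\pm$, $Y$ (i.e. dimension-one fields of zero momentum in $\mathcal{V}_\xi$), those commuting with all screenings of the $n[m]$ realization form a one-dimensional space, spanned by $$\mathcal{H}^{(k)}_{n[m]}(z)=\ell_n(k)Y(z)+\sum_{i=1}^{n-m-1}\frac{n-i-m}{n}A_i(z)+\frac{n-m}{n}Q_+(z)-\sum_{i=-m+1}^{-1}\frac{m+i}{n}A_i(z)-\frac{m}{n}Q_-(z),$$ which satisfies $\mathcal{H}^{(k)}_{n[m]}(z)\mathcal{H}^{(k)}_{n[m]}(w)\sim \ell_n(k)(z-w)^{-2}$, where $\ell_n(k)=\frac{n-1}{n}k+n-2$.
   Context: Setup. Fix integers $n\ge 2$ and $0\le m\le n$, a generic complex number $k$ (in particular $k\neq -n$), and put $K=k+n$. Let $\varphi=(\varphi_1,\dots,\varphi_{n+1})$ be free scalar fields with OPE $\partial\varphi_i(z)\partial\varphi_j(w)\sim\delta_{ij}(z-w)^{-2}$, and let $(\,,\,)$ be the standard symmetric bilinear form on $\mathbb{C}^{n+1}$. Choose vectors $a_i$ ($1\le i\le n-m-1$), $a_{-i}$ ($1\le i\le m-1$), $\psi_+$ (present iff $m\le n-1$), $\psi_-$ (present iff $m\ge 1$), and $\xi$ in $\mathbb{C}^{n+1}$ whose nonzero pairwise products are: $(a_j,a_j)=2K$ for every $a_j$ present; $(a_i,a_{i+1})=-K$ for $1\le i\le n-m-2$; $(a_{-i},a_{-i-1})=-K$ for $1\le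 i\le m-2$; $(a_1,\psi_+)=-K$; $(a_{-1},\psi_-)=-K$; $(\psi_\pm,\psi_\pm)=1$; $(\psi_+,\psi_-)=K-1$; $(\psi_+,\xi)=1$; $(\psi_-,\xi)=-1$; all other products (including $(\xi,\xi)$ and $(a_j,\xi)$) vanish. Define currents $A_j=(a_j,\partial\varphi)$, $Q_\pm=(\psi_\pm,\partial\varphi)$, $Y=(\xi,\partial\varphi)$ and the field $\Xi=(\xi,\varphi)$. The screening operators are $E_j=\oint e^{(a_j,\varphi)}$ for each $a_j$ present and $\Psi_\pm=\oint e^{(\psi_\pm,\varphi)}$ for each $\psi_\pm$ present. Let $\mathcal{V}_\xi$ be the space of fields $:P(\partial\varphi)e^{p\Xi}:$, $p\in\mathbb{Z}$, with $P$ a normal-ordered differential polynomial in the components of $\partial\varphi$. A field $X(w)$ commutes with a screening $\oint s(z)\,dz$ if the residue at $z=w$ of the OPE $s(z)X(w)$ vanishes. Terms involving absent vectors (e.g. $Q_-$ when $m=0$) are omitted. *)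

theory Defs
  imports "HOL-Analysis.Analysis"
begin

text \<open>Labels of the vectors of the n[m] realization:
  VA j for a_j (j a nonzero integer), VPp for psi_plus, VPm for psi_minus, VXi for xi.\<close>
datatype vlabel = VA int | VPp | VPm | VXi

definition present :: "nat \<Rightarrow> nat \<Rightarrow> vlabel set" where
  "present n m =
     VA ` {1 .. int n - int m - 1} \<union> VA ` {- int m + 1 .. -1}
     \<union> (if m < n then {VPp} else {})
     \<union> (if 1 \<le> m then {VPm} else {}) \<union> {VXi}"

definition screening_labels :: "nat \<Rightarrow> nat \<Rightarrow> vlabel set" where
  "screening_labels n m = present n m - {VXi}"

text \<open>Prescribed Gram matrix (with K = k + n); entries not listed vanish.\<close>
fun gram :: "complex \<Rightarrow> vlabel \<Rightarrow> vlabel \<Rightarrow> complex" where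
  "gram K (VA i) (VA j) =
     (if i = j then 2 * K
      else if 1 \<le> i \<and> 1 \<le> j \<and> (j = i + 1 \<or> i = j + 1) then - K
      else if i \<le> -1 \<and> j \<le> -1 \<and> (j = i - 1 \<or> i = j - 1) then - K
      else 0)"
| "gram K (VA i) VPp = (if i = 1 then - K else 0)"
| "gram K VPp (VA i) = (if i = 1 then - K else 0)"
| "gram K (VA i) VPm = (if i = -1 then - K else 0)"
| "gram K VPm (VA i) = (if i = -1 then - K else 0)"
| "gram K (VA i) VXi = 0"
| "gram K VXi (VA i) = 0"
| "gram K VPp VPp = 1"
| "gram K VPm VPm = 1"
| "gram K VPp VPm = K - 1"
| "gram K VPm VPp = K - 1"
| "gram K VPp VXi = 1"
| "gram K VXi VPp = 1"
| "gram K VPm VXi = -1"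
| "gram K VXi VPm = -1"
| "gram K VXi VXi = 0"

definition bil :: "complex ^ 'd \<Rightarrow> complex ^ 'd \<Rightarrow> complex" where
  "bil x y = (\<Sum>i\<in>UNIV. x $ i * y $ i)"

text \<open>The current (v, d phi) commutes with the screening oint exp((s, phi)):
  the OPE exp((s,phi))(z) (v,d phi)(w) ~ -(s,v) exp((s,phi))(w) / (z - w),
  so the residue vanishes iff (s, v) = 0.\<close>
definition commutes_screening :: "complex ^ 'd \<Rightarrow> complex ^ 'd \<Rightarrow> bool" where
  "commutes_screening s v \<longleftrightarrow> bil s v = 0"

text \<open>Vectors v such that the field (v, d phi) is a linear combination of the
  currents A_j, Q_+-, Y of the realization.\<close>
definition currents_span :: "nat \<Rightarrow> nat \<Rightarrow> (vlabel \<Rightarrow> complex ^ 'd) \<Rightarrow> (complex ^ 'd) set" where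
  "currents_span n m V = {v. \<exists>c. v = (\<Sum>x\<in>present n m. c x *s V x)}"

definition ell :: "nat \<Rightarrow> complex \<Rightarrow> complex" where
  "ell n k = (of_nat n - 1) / of_nat n * k + of_nat n - 2"

definition Hvec :: "nat \<Rightarrow> nat \<Rightarrow> complex \<Rightarrow> (vlabel \<Rightarrow> complex ^ 'd) \<Rightarrow> complex ^ 'd" where
  "Hvec n m k V =
     ell n k *s V VXi
     + (\<Sum>i\<in>{1 .. int n - int m - 1}. (of_int (int n - i - int m) / of_nat n) *s V (VA i))
     + (of_nat (n - m) / of_nat n) *s V VPp
     - (\<Sum>i\<in>{- int m + 1 .. -1}. (of_int (int m + i) / of_nat n) *s V (VA i))
     - (of_nat m / of_nat n) *s V VPm"

end

theory Submission
  imports Defs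
begin

(* Pairing a combination v = \<Sum>x. c x *s V x with the vector V s gives gram_pairing c s, so only
   the Gram matrix matters. Apart from xi, the labels form two legs psi_+, a_1, a_2, ... and
   psi_-, a_-1, a_-2, ..., which touch only at their roots psi_+ and psi_-. Along a leg the Gram
   matrix is K times the discrete Laplacian, and xi pairs only with the two roots, with opposite
   signs. So the screening conditions make c affine along each leg, vanishing one step past its
   end, and the two root equations determine c from the single number X = (xi, v): c = X * Hcoeff.
   Conversely Hcoeff solves the system with (xi, H) = 1, hence (H, H) = Hcoeff xi = ell n k,
   which is nonzero for generic k. *)

lemma sum_lessThan_delta:
  fixes e :: "nat \<Rightarrow> 'a::semiring_0"
  assumes "\<forall>j\<ge>L. e j = 0"
  shows "(\<Sum>j<L. e j * (if j = a then r else 0)) = e a * r"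
proof -
  have "(\<Sum>j<L. e j * (if j = a then r else 0)) = (\<Sum>j<L. if j = a then e a * r else 0)"
    by (rule sum.cong) auto
  then show ?thesis using assms by auto
qed

lemma sum_lessThan_tridiagonal:
  fixes e :: "nat \<Rightarrow> 'a::comm_ring_1"
  assumes "\<forall>j\<ge>L. e j = 0"
  shows "(\<Sum>j<L. e j * (if i = j then d else if j = Suc i \<or> Suc j = i then s else 0)) =
           d * e i + s * e (Suc i) + (if i = 0 then 0 else s * e (i - 1))"
proof -
  have "(\<Sum>j<L. e j * (if i = j then d else if j = Suc i \<or> Suc j = i then s else 0)) =
        (\<Sum>j<L. e j * (if j = i then d else 0) + e j * (if j = Suc i then s else 0)
                 + e j * (if j = i - 1 then (if i = 0 then 0 else s) else 0))"
    by (rule sum.cong) auto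
  then show ?thesis
    by (simp add: sum.distrib sum_lessThan_delta[OF assms] mult.commute)
qed

lemma second_difference_zero_affine:
  fixes e :: "nat \<Rightarrow> 'a::comm_ring_1"
  assumes harmonic: "\<And>i. 0 < i \<Longrightarrow> i < L \<Longrightarrow> 2 * e i = e (i - 1) + e (Suc i)"
  shows "j \<le> L \<Longrightarrow> e j = e 0 + of_nat j * (e 1 - e 0)"
proof (induction j rule: less_induct)
  case (less j)
  show ?case
  proof (cases "j < 2")
    case True
    then show ?thesis by (cases j) auto
  next
    case False
    then obtain i where j: "j = Suc (Suc i)"
      by (metis add_2_eq_Suc le_add_diff_inverse not_less)
    have "2 * e (Suc i) = e i + e j"
      using harmonic[of "Suc i"] j less.prems by simp
    then show ?thesis
      using less.IH[of i] less.IH[of "Suc i"] less.prems unfolding j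
      by (simp add: algebra_simps)
  qed
qed

lemma second_difference_zero_interpolate:
  fixes e :: "nat \<Rightarrow> 'a::field_char_0"
  assumes harmonic: "\<And>i. 0 < i \<Longrightarrow> i < L \<Longrightarrow> 2 * e i = e (i - 1) + e (Suc i)"
    and boundary: "e L = 0" and "j \<le> L"
  shows "e j = e 0 * (of_nat L - of_nat j) / of_nat L"
proof (cases "L = 0")
  case True
  then show ?thesis using boundary \<open>j \<le> L\<close> by simp
next
  case False
  have "e L = e 0 + of_nat L * (e 1 - e 0)"
    using second_difference_zero_affine[OF harmonic order_refl] .
  then have slope: "of_nat L * (e 1 - e 0) = - e 0"
    using boundary by (metis add.commute eq_neg_iff_add_eq_0)
  have "of_nat L * e j = of_nat L * (e 0 + of_nat j * (e 1 - e 0))"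
    by (simp only: second_difference_zero_affine[OF harmonic \<open>j \<le> L\<close>])
  also have "\<dots> = of_nat L * e 0 + of_nat j * (of_nat L * (e 1 - e 0))"
    by (simp add: algebra_simps)
  also have "\<dots> = e 0 * (of_nat L - of_nat j)"
    unfolding slope by (simp add: algebra_simps)
  finally show ?thesis
    using False by (simp add: eq_divide_eq mult.commute)
qed

definition leg_sign :: "bool \<Rightarrow> 'a::ring_1" where
  "leg_sign b = (if b then 1 else - 1)"

definition leg_len :: "nat \<Rightarrow> nat \<Rightarrow> bool \<Rightarrow> nat" where
  "leg_len n m b = (if b then n - m else m)"

definition leg :: "bool \<Rightarrow> nat \<Rightarrow> vlabel" where
  "leg b j = (if j = 0 then (if b then VPp else VPm) else VA (leg_sign b * int j))"

lemma leg_eq_iff: "leg b i = leg b' j \<longleftrightarrow> b = b' \<and> i = j"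
  by (auto simp: leg_def leg_sign_def split: if_splits)

lemma leg_neq_VXi [simp]: "leg b j \<noteq> VXi" "VXi \<noteq> leg b j"
  by (simp_all add: leg_def)

lemma leg_sign_not: "leg_sign (\<not> b) = - leg_sign b"
  by (simp add: leg_sign_def)

lemma leg_sign_square: "leg_sign b * leg_sign b = 1"
  by (simp add: leg_sign_def)

lemma leg_len_add: "m \<le> n \<Longrightarrow> leg_len n m b + leg_len n m (\<not> b) = n"
  by (simp add: leg_len_def)

lemma leg_True_image:
  "leg True ` {..<N} = (if N = 0 then {} else {VPp}) \<union> VA ` {1 .. int N - 1}"
proof -
  have "VA i \<in> leg True ` {..<N}" if "1 \<le> i" "i \<le> int N - 1" for i
    using that by (intro image_eqI[of _ _ "nat i"]) (auto simp: leg_def leg_sign_def)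
  then show ?thesis
    by (auto simp: leg_def leg_sign_def intro: image_eqI[of _ _ 0])
qed

lemma leg_False_image:
  "leg False ` {..<N} = (if N = 0 then {} else {VPm}) \<union> VA ` {- int N + 1 .. - 1}"
proof -
  have "VA i \<in> leg False ` {..<N}" if "- int N + 1 \<le> i" "i \<le> - 1" for i
    using that by (intro image_eqI[of _ _ "nat (- i)"]) (auto simp: leg_def leg_sign_def)
  then show ?thesis
    by (auto simp: leg_def leg_sign_def intro: image_eqI[of _ _ 0])
qed

lemma present_legs:
  "present n m = insert VXi (leg True ` {..<n - m} \<union> leg False ` {..<m})"
  unfolding present_def leg_True_image leg_False_image by auto

lemma present_cases:
  assumes "x \<in> present n m"
  obtains (VXi) "x = VXi" | (leg) b j where "j < leg_len n m b" "x = leg b j"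
proof -
  consider "x = VXi" | j where "j < leg_len n m True" "x = leg True j"
    | j where "j < leg_len n m False" "x = leg False j"
    using assms unfolding present_legs leg_len_def by auto
  then show thesis by cases (auto intro: that)
qed

lemma screening_labels_legs:
  "screening_labels n m = {leg b j | b j. j < leg_len n m b}"
  unfolding screening_labels_def present_legs leg_len_def by auto

lemma sum_legs:
  "(\<Sum>j<N. f (leg b j)) = sum f (leg b ` {..<N})"
  by (simp add: sum.reindex inj_on_def leg_eq_iff)

lemma sum_present_legs:
  "(\<Sum>x\<in>present n m. f x) = f VXi + (\<Sum>j<n - m. f (leg True j)) + (\<Sum>j<m. f (leg False j))"
proof -
  have "sum f (leg True ` {..<n - m} \<union> leg False ` {..<m}) =
        sum f (leg True ` {..<n - m}) + sum f (leg False ` {..<m})"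
    by (rule sum.union_disjoint) (auto simp: leg_eq_iff)
  then show ?thesis
    unfolding present_legs sum_legs by (subst sum.insert) (auto simp: add.assoc)
qed

lemma sum_present:
  "(\<Sum>x\<in>present n m. f x) =
     f VXi + (\<Sum>j<leg_len n m b. f (leg b j)) + (\<Sum>j<leg_len n m (\<not> b). f (leg (\<not> b) j))"
  unfolding sum_present_legs leg_len_def by (cases b) (simp_all add: add_ac)

lemma sum_leg_True:
  "(\<Sum>j<N. f (leg True j)) = (if N = 0 then 0 else f VPp) + (\<Sum>i\<in>{1 .. int N - 1}. f (VA i))"
proof -
  have "sum f ((if N = 0 then {} else {VPp}) \<union> VA ` {1 .. int N - 1}) =
        sum f (if N = 0 then {} else {VPp}) + sum f (VA ` {1 .. int N - 1})"
    by (rule sum.union_disjoint) auto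
  then show ?thesis
    unfolding sum_legs leg_True_image by (simp add: sum.reindex inj_on_def)
qed

lemma sum_leg_False:
  "(\<Sum>j<N. f (leg False j)) = (if N = 0 then 0 else f VPm) + (\<Sum>i\<in>{- int N + 1 .. - 1}. f (VA i))"
proof -
  have "sum f ((if N = 0 then {} else {VPm}) \<union> VA ` {- int N + 1 .. - 1}) =
        sum f (if N = 0 then {} else {VPm}) + sum f (VA ` {- int N + 1 .. - 1})"
    by (rule sum.union_disjoint) auto
  then show ?thesis
    unfolding sum_legs leg_False_image by (simp add: sum.reindex inj_on_def)
qed

lemma gram_commute: "gram K x y = gram K y x"
  by (cases x; cases y) auto

lemma gram_leg_same:
  "gram K (leg b i) (leg b j) =
     (if i = j then (if i = 0 then 1 else 2 * K) else if j = Suc i \<or> Suc j = i then - K else 0)"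
  by (auto simp: leg_def leg_sign_def)

lemma gram_leg_other:
  "gram K (leg b i) (leg (\<not> b) j) = (if i = 0 \<and> j = 0 then K - 1 else 0)"
  by (auto simp: leg_def leg_sign_def)

lemma gram_VXi_leg: "gram K VXi (leg b j) = (if j = 0 then leg_sign b else 0)"
  by (auto simp: leg_def leg_sign_def)

definition gram_pairing :: "nat \<Rightarrow> nat \<Rightarrow> complex \<Rightarrow> (vlabel \<Rightarrow> complex) \<Rightarrow> vlabel \<Rightarrow> complex" where
  "gram_pairing n m K c s = (\<Sum>x\<in>present n m. c x * gram K s x)"

definition leg_coeff :: "nat \<Rightarrow> nat \<Rightarrow> (vlabel \<Rightarrow> 'a::zero) \<Rightarrow> bool \<Rightarrow> nat \<Rightarrow> 'a" where
  "leg_coeff n m c b j = (if j < leg_len n m b then c (leg b j) else 0)"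

lemma leg_coeff_vanishes: "\<forall>j\<ge>leg_len n m b. leg_coeff n m c b j = 0"
  by (simp add: leg_coeff_def)

lemma sum_leg_coeff:
  "(\<Sum>j<leg_len n m b. c (leg b j) * g j) = (\<Sum>j<leg_len n m b. leg_coeff n m c b j * g j)"
  by (rule sum.cong) (simp_all add: leg_coeff_def)

lemma gram_pairing_leg:
  "gram_pairing n m K c (leg b i) =
     (if i = 0 then leg_coeff n m c b 0 + (K - 1) * leg_coeff n m c (\<not> b) 0 + leg_sign b * c VXi
      else 2 * K * leg_coeff n m c b i - K * leg_coeff n m c b (i - 1))
     - K * leg_coeff n m c b (Suc i)"
  unfolding gram_pairing_def sum_present[of _ _ _ b] sum_leg_coeff[where c = c and b = b]
    sum_leg_coeff[where c = c and b = "\<not> b"]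
  by (auto simp: gram_commute[of _ _ VXi] gram_VXi_leg gram_leg_same gram_leg_other
        sum_lessThan_tridiagonal[OF leg_coeff_vanishes] sum_lessThan_delta[OF leg_coeff_vanishes]
        algebra_simps)

lemma gram_pairing_VXi: "gram_pairing n m K c VXi = leg_coeff n m c True 0 - leg_coeff n m c False 0"
  unfolding gram_pairing_def sum_present[of _ _ _ True] sum_leg_coeff[where c = c]
  by (simp add: gram_VXi_leg sum_lessThan_delta[OF leg_coeff_vanishes] leg_sign_def)

fun Hcoeff :: "nat \<Rightarrow> nat \<Rightarrow> complex \<Rightarrow> vlabel \<Rightarrow> complex" where
  "Hcoeff n m k VXi = ell n k"
| "Hcoeff n m k VPp = of_nat (n - m) / of_nat n"
| "Hcoeff n m k VPm = - of_nat m / of_nat n"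
| "Hcoeff n m k (VA i) =
     (if 0 < i then of_int (int n - i - int m) / of_nat n else - of_int (int m + i) / of_nat n)"

lemma leg_coeff_Hcoeff:
  assumes "m \<le> n" "j \<le> leg_len n m b"
  shows "leg_coeff n m (Hcoeff n m k) b j =
           leg_sign b * (of_nat (leg_len n m b) - of_nat j) / of_nat n"
proof (cases "j = leg_len n m b")
  case False
  then have "j < leg_len n m b" using assms(2) by simp
  then show ?thesis
    using assms(1) by (cases b) (auto simp: leg_coeff_def leg_def leg_sign_def leg_len_def)
qed (simp add: leg_coeff_def)

lemma gram_pairing_Hcoeff_VXi:
  assumes "0 < n" "m \<le> n"
  shows "gram_pairing n m K (Hcoeff n m k) VXi = 1"
  using assms by (simp add: gram_pairing_VXi leg_coeff_Hcoeff leg_sign_def leg_len_def field_simps)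

lemma gram_pairing_Hcoeff_leg:
  assumes "0 < n" "m \<le> n" "i < leg_len n m b"
  shows "gram_pairing n m (k + of_nat n) (Hcoeff n m k) (leg b i) = 0"
proof -
  let ?L = "of_nat (leg_len n m b) :: complex"
  have other: "of_nat (leg_len n m (\<not> b)) = of_nat n - ?L"
    using leg_len_add[OF assms(2), of b] by (metis add_diff_cancel_left' of_nat_add)
  show ?thesis
    using assms unfolding gram_pairing_leg
    by (simp add: leg_coeff_Hcoeff other leg_sign_not ell_def field_simps)
qed

definition screening_solution :: "nat \<Rightarrow> nat \<Rightarrow> complex \<Rightarrow> (vlabel \<Rightarrow> complex) \<Rightarrow> bool" where
  "screening_solution n m K c \<longleftrightarrow> (\<forall>s\<in>screening_labels n m. gram_pairing n m K c s = 0)"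

lemma screening_solution_Hcoeff:
  assumes "0 < n" "m \<le> n"
  shows "screening_solution n m (k + of_nat n) (Hcoeff n m k)"
  using assms gram_pairing_Hcoeff_leg unfolding screening_solution_def screening_labels_legs by blast

lemma screening_solution_leg:
  assumes "screening_solution n m K c" "i < leg_len n m b"
  shows "gram_pairing n m K c (leg b i) = 0"
  using assms unfolding screening_solution_def screening_labels_legs by blast

lemma screening_solution_interpolate:
  assumes c: "screening_solution n m K c" and "K \<noteq> 0" "j \<le> leg_len n m b"
  shows "leg_coeff n m c b j =
           leg_coeff n m c b 0 * (of_nat (leg_len n m b) - of_nat j) / of_nat (leg_len n m b)"
proof (rule second_difference_zero_interpolate[OF _ _ \<open>j \<le> leg_len n m b\<close>])
  fix i
  assume i: "0 < i" "i < leg_len n m b"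
  have "K * (2 * leg_coeff n m c b i - leg_coeff n m c b (i - 1) - leg_coeff n m c b (Suc i)) = 0"
    using screening_solution_leg[OF c i(2)] i(1) unfolding gram_pairing_leg by (simp add: algebra_simps)
  then have "2 * leg_coeff n m c b i - leg_coeff n m c b (i - 1) - leg_coeff n m c b (Suc i) = 0"
    using \<open>K \<noteq> 0\<close> by simp
  then show "2 * leg_coeff n m c b i = leg_coeff n m c b (i - 1) + leg_coeff n m c b (Suc i)"
    by algebra
qed (simp add: leg_coeff_def)

lemma screening_solution_root:
  assumes c: "screening_solution n m K c" and "K \<noteq> 0"
  shows "leg_sign b * leg_coeff n m c b 0 =
           of_nat (leg_len n m b) * (((K - 1) * gram_pairing n m K c VXi - c VXi) / K)"
proof (cases "leg_len n m b = 0")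
  case True
  then show ?thesis by (simp add: leg_coeff_def)
next
  case False
  let ?L = "of_nat (leg_len n m b) :: complex" and ?e = "leg_coeff n m c"
  have "?L * ?e b 1 = ?e b 0 * (?L - 1)"
    using screening_solution_interpolate[OF assms, of 1 b] False by simp
  moreover have "?e b 0 + (K - 1) * ?e (\<not> b) 0 + leg_sign b * c VXi - K * ?e b 1 = 0"
    using screening_solution_leg[OF c, of 0 b] False unfolding gram_pairing_leg by simp
  moreover have "gram_pairing n m K c VXi = leg_sign b * (?e b 0 - ?e (\<not> b) 0)"
    by (cases b) (simp_all add: gram_pairing_VXi leg_sign_def)
  moreover have "K * (s * e0) = L * ((K - 1) * X - c0)"
    if "L * e1 = e0 * (L - 1)" "e0 + (K - 1) * e' + s * c0 - K * e1 = 0"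
      "X = s * (e0 - e')" "s * s = 1" for L s e0 e1 e' c0 X :: complex
    using that by algebra
  ultimately have "K * (leg_sign b * ?e b 0) = ?L * ((K - 1) * gram_pairing n m K c VXi - c VXi)"
    using leg_sign_square[of b] by blast
  then show ?thesis
    using \<open>K \<noteq> 0\<close> by (simp add: field_simps)
qed

lemma screening_solution_eq:
  assumes "0 < n" "m \<le> n" and K: "K = k + of_nat n" "K \<noteq> 0"
    and c: "screening_solution n m K c" and "x \<in> present n m"
  shows "c x = gram_pairing n m K c VXi * Hcoeff n m k x"
proof -
  define X where "X = gram_pairing n m K c VXi"
  \<comment> \<open>up to the sign of the leg, both legs of c decrease with the same slope r\<close>
  define r where "r = ((K - 1) * X - c VXi) / K"
  have root: "leg_sign b * leg_coeff n m c b 0 = of_nat (leg_len n m b) * r" for b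
    unfolding r_def X_def by (rule screening_solution_root[OF c K(2)])
  have X_eq: "X = of_nat n * r"
  proof -
    have "X = leg_sign True * leg_coeff n m c True 0 + leg_sign False * leg_coeff n m c False 0"
      by (simp add: X_def gram_pairing_VXi leg_sign_def)
    also have "\<dots> = (of_nat (leg_len n m True) + of_nat (leg_len n m False)) * r"
      unfolding root by (simp add: algebra_simps)
    also have "of_nat (leg_len n m True) + of_nat (leg_len n m False) = (of_nat n :: complex)"
      using leg_len_add[OF assms(2), of True] by (metis not_True_eq_False of_nat_add)
    finally show ?thesis .
  qed
  from \<open>x \<in> present n m\<close> show ?thesis
  proof (cases rule: present_cases)
    case VXi
    have "c VXi = (K - 1) * X - K * r"
      unfolding r_def using K(2) by simp
    moreover have "of_nat n * ell n k = (of_nat n - 1) * k + of_nat n * (of_nat n - 2)"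
      using assms(1) by (simp add: ell_def field_simps)
    ultimately have "c VXi = X * ell n k"
      unfolding X_eq K(1) by algebra
    then show ?thesis
      using VXi by (simp add: X_def)
  next
    case (leg b j)
    have e0: "leg_coeff n m c b 0 = leg_sign b * of_nat (leg_len n m b) * r"
      using root[of b] by (cases b) (simp_all add: leg_sign_def, metis minus_minus)
    have "c x = leg_coeff n m c b j"
      using leg by (simp add: leg_coeff_def)
    also have "\<dots> = leg_sign b * r * (of_nat (leg_len n m b) - of_nat j)"
      using screening_solution_interpolate[OF c K(2), of j b] leg(1) unfolding e0 by simp
    also have "\<dots> = X * leg_coeff n m (Hcoeff n m k) b j"
      using leg(1) assms(1,2) unfolding X_eq by (simp add: leg_coeff_Hcoeff)
    also have "\<dots> = X * Hcoeff n m k x"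
      using leg by (simp add: leg_coeff_def)
    finally show ?thesis
      by (simp add: X_def)
  qed
qed

lemma bil_commute: "bil u w = bil w u"
  unfolding bil_def by (simp add: mult.commute)

lemma bil_smult_right: "bil u (a *s w) = a * bil u w"
  unfolding bil_def by (simp add: sum_distrib_left mult.left_commute)

lemma bil_sum_right: "bil u (\<Sum>x\<in>A. f x) = (\<Sum>x\<in>A. bil u (f x))"
  unfolding bil_def by (simp add: sum_distrib_left sum.swap[of _ A])

definition realizes_gram :: "nat \<Rightarrow> nat \<Rightarrow> complex \<Rightarrow> (vlabel \<Rightarrow> complex ^ 'd) \<Rightarrow> bool" where
  "realizes_gram n m K V \<longleftrightarrow>
     (\<forall>x\<in>present n m. \<forall>y\<in>present n m. bil (V x) (V y) = gram K x y)"

lemma bil_combination: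
  assumes "realizes_gram n m K V" "s \<in> present n m"
  shows "bil (V s) (\<Sum>x\<in>present n m. c x *s V x) = gram_pairing n m K c s"
  using assms unfolding realizes_gram_def gram_pairing_def bil_sum_right bil_smult_right
  by (intro sum.cong) (auto simp: mult.commute)

lemma bil_combination_self:
  assumes "realizes_gram n m K V"
  shows "bil (\<Sum>x\<in>present n m. c x *s V x) (\<Sum>x\<in>present n m. c x *s V x) =
           (\<Sum>x\<in>present n m. c x * gram_pairing n m K c x)"
proof -
  define S where "S = (\<Sum>x\<in>present n m. c x *s V x)"
  have "bil S S = (\<Sum>x\<in>present n m. c x * bil S (V x))"
    by (subst (2) S_def) (simp add: bil_sum_right bil_smult_right)
  also have "\<dots> = (\<Sum>x\<in>present n m. c x * gram_pairing n m K c x)"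
    using bil_combination[OF assms] unfolding S_def by (intro sum.cong) (simp_all add: bil_commute)
  finally show ?thesis
    unfolding S_def .
qed

lemma Hvec_eq:
  assumes "m \<le> n"
  shows "Hvec n m k V = (\<Sum>x\<in>present n m. Hcoeff n m k x *s V x)"
proof -
  have "(\<Sum>i\<in>{- int m + 1 .. - 1}. Hcoeff n m k (VA i) *s V (VA i)) =
        - (\<Sum>i\<in>{- int m + 1 .. - 1}. (of_int (int m + i) / of_nat n) *s V (VA i))"
    by (simp add: sum_negf[symmetric] vector_smult_lneg[symmetric] minus_divide_left)
  moreover have "(\<Sum>i\<in>{1 .. int (n - m) - 1}. Hcoeff n m k (VA i) *s V (VA i)) =
        (\<Sum>i\<in>{1 .. int n - int m - 1}. (of_int (int n - i - int m) / of_nat n) *s V (VA i))"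
    using assms by (intro sum.cong) auto
  ultimately show ?thesis
    unfolding Hvec_def sum_present_legs
      sum_leg_True[where f = "\<lambda>x. Hcoeff n m k x *s V x"]
      sum_leg_False[where f = "\<lambda>x. Hcoeff n m k x *s V x"]
    by (simp add: vector_smult_lneg)
qed

lemma Hvec_square:
  assumes "0 < n" "m \<le> n" "realizes_gram n m (k + of_nat n) V"
  shows "bil (Hvec n m k V) (Hvec n m k V) = ell n k"
proof -
  have "bil (Hvec n m k V) (Hvec n m k V) =
        (\<Sum>x\<in>present n m. Hcoeff n m k x * gram_pairing n m (k + of_nat n) (Hcoeff n m k) x)"
    unfolding Hvec_eq[OF assms(2)] by (rule bil_combination_self[OF assms(3)])
  also have "\<dots> = (\<Sum>x\<in>present n m. if x = VXi then ell n k else 0)"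
    using screening_solution_Hcoeff[OF assms(1,2)] gram_pairing_Hcoeff_VXi[OF assms(1,2)]
    by (intro sum.cong) (auto simp: screening_solution_def screening_labels_def)
  also have "\<dots> = ell n k"
    by (simp add: present_def)
  finally show ?thesis .
qed

lemma screening_commutant_eq:
  assumes "0 < n" "m \<le> n" "k + of_nat n \<noteq> 0" "realizes_gram n m (k + of_nat n) V"
  shows "{v \<in> currents_span n m V. \<forall>s\<in>screening_labels n m. commutes_screening (V s) v} =
           {t *s Hvec n m k V | t. True}"
proof (intro equalityI subsetI)
  fix v
  assume "v \<in> {v \<in> currents_span n m V. \<forall>s\<in>screening_labels n m. commutes_screening (V s) v}"
  then obtain c where v: "v = (\<Sum>x\<in>present n m. c x *s V x)"
    and commutes: "\<forall>s\<in>screening_labels n m. bil (V s) v = 0"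
    unfolding currents_span_def commutes_screening_def by blast
  have "screening_solution n m (k + of_nat n) c"
    using commutes bil_combination[OF assms(4)]
    unfolding v screening_solution_def screening_labels_def by auto
  then have "\<forall>x\<in>present n m. c x = gram_pairing n m (k + of_nat n) c VXi * Hcoeff n m k x"
    using screening_solution_eq[OF assms(1,2) refl assms(3)] by blast
  then have "v = gram_pairing n m (k + of_nat n) c VXi *s Hvec n m k V"
    unfolding v Hvec_eq[OF assms(2)] sum_cmul[symmetric] vector_smult_assoc
    by (intro sum.cong) simp_all
  then show "v \<in> {t *s Hvec n m k V | t. True}"
    by blast
next
  fix v
  assume "v \<in> {t *s Hvec n m k V | t. True}"
  then obtain t where v: "v = t *s Hvec n m k V"
    by blast
  have "v = (\<Sum>x\<in>present n m. (t * Hcoeff n m k x) *s V x)"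
    unfolding v Hvec_eq[OF assms(2)] sum_cmul[symmetric] vector_smult_assoc ..
  moreover have "bil (V s) v = 0" if "s \<in> screening_labels n m" for s
    using that screening_solution_Hcoeff[OF assms(1,2)] bil_combination[OF assms(4)]
    unfolding v bil_smult_right Hvec_eq[OF assms(2)] screening_solution_def screening_labels_def
    by simp
  ultimately show "v \<in> {v \<in> currents_span n m V. \<forall>s\<in>screening_labels n m. commutes_screening (V s) v}"
    unfolding currents_span_def commutes_screening_def by auto
qed

lemma finite_ell_zeros:
  assumes "2 \<le> n"
  shows "finite {k. ell n k = 0}"
proof (rule finite_subset)
  show "{k. ell n k = 0} \<subseteq> {(2 - of_nat n) * of_nat n / (of_nat n - 1)}"
    using assms by (auto simp: ell_def field_simps)
qed simp

theorem lemma2p1: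
  fixes n m :: nat
  assumes "2 \<le> n" and "m \<le> n" and "CARD('d) = n + 1"
  shows "\<exists>F :: complex set. finite F \<and>
    (\<forall>k. k \<notin> F \<and> k \<noteq> - of_nat n \<longrightarrow>
      (\<forall>V :: vlabel \<Rightarrow> complex ^ 'd.
         (\<forall>x\<in>present n m. \<forall>y\<in>present n m. bil (V x) (V y) = gram (k + of_nat n) x y) \<longrightarrow>
         ({v \<in> currents_span n m V. \<forall>s\<in>screening_labels n m. commutes_screening (V s) v}
            = {t *s Hvec n m k V | t. True}
          \<and> Hvec n m k V \<noteq> 0
          \<and> bil (Hvec n m k V) (Hvec n m k V) = ell n k)))"
proof (intro exI conjI allI impI)
  show "finite {k. ell n k = 0}"
    using finite_ell_zeros[OF assms(1)] .
  fix k :: complex and V :: "vlabel \<Rightarrow> complex ^ 'd"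
  assume k: "k \<notin> {k. ell n k = 0} \<and> k \<noteq> - of_nat n"
  assume "\<forall>x\<in>present n m. \<forall>y\<in>present n m. bil (V x) (V y) = gram (k + of_nat n) x y"
  then have V: "realizes_gram n m (k + of_nat n) V"
    unfolding realizes_gram_def .
  have n: "0 < n" using assms(1) by simp
  have K: "k + of_nat n \<noteq> 0"
    using k by (simp add: eq_neg_iff_add_eq_0)
  show "{v \<in> currents_span n m V. \<forall>s\<in>screening_labels n m. commutes_screening (V s) v} =
          {t *s Hvec n m k V | t. True}"
    using screening_commutant_eq[OF n assms(2) K V] .
  show square: "bil (Hvec n m k V) (Hvec n m k V) = ell n k"
    using Hvec_square[OF n assms(2) V] .
  show "Hvec n m k V \<noteq> 0"
    using square k by (auto simp: bil_def)
qed

end
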